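(* Let $G$ be an internally vertex-color-avoiding connected graph on $n$ vertices whose vertices are colored with exactly $k$ colors. Then $|E(G)|\ge \binom{n}{2}$ if $k=1$, and $|E(G)|\ge \left\lceil \frac{2k-1}{2k-2}n-\frac{k}{k-1}\right\rceil$ if $k\ge 2$. Moreover, these lower bounds are sharp (for each $k$, attained by suitable such graphs for all sufficiently large $n$).
   Context: Vertex-colorings are arbitrary (not necessarily proper). Two vertices $u,v$ are internally vertex-$c$-avoiding connected (for a color $c$) if some $u$-$v$ path contains no internal vertex of color $c$. A graph is internally vertex-color-avoiding connected if any two vertices are internally vertex-$c$-avoiding connected for every color $c$. *)

theory Defs
  imports Complex_Main
begin

definition simple_graph :: "'a set \<Rightarrow> 'a set set \<Rightarrow> bool" where
  "simple_graph V E \<longleftrightarrow> finite V \<and> (\<forall>e\<in>E. e \<subseteq> V \<and> card e = 2)"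

definition is_path :: "'a set \<Rightarrow> 'a set set \<Rightarrow> 'a list \<Rightarrow> 'a \<Rightarrow> 'a \<Rightarrow> bool" where
  "is_path V E p u v \<longleftrightarrow> p \<noteq> [] \<and> hd p = u \<and> last p = v \<and> distinct p \<and> set p \<subseteq> V \<and>
     (\<forall>i. Suc i < length p \<longrightarrow> {p ! i, p ! Suc i} \<in> E)"

definition internal_vertices :: "'a list \<Rightarrow> 'a set" where
  "internal_vertices p = set (butlast (tl p))"

definition int_c_avoiding_connected ::
  "'a set \<Rightarrow> 'a set set \<Rightarrow> ('a \<Rightarrow> 'c) \<Rightarrow> 'c \<Rightarrow> 'a \<Rightarrow> 'a \<Rightarrow> bool" where
  "int_c_avoiding_connected V E col c u v \<longleftrightarrow>
     (\<exists>p. is_path V E p u v \<and> (\<forall>w\<in>internal_vertices p. col w \<noteq> c))"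

text \<open>Colorings are arbitrary functions; "every colour c" ranges over all colours (colours not
  used on V impose plain connectivity, which is implied anyway).\<close>
definition int_vca_connected :: "'a set \<Rightarrow> 'a set set \<Rightarrow> ('a \<Rightarrow> 'c) \<Rightarrow> bool" where
  "int_vca_connected V E col \<longleftrightarrow>
     (\<forall>c. \<forall>u\<in>V. \<forall>v\<in>V. int_c_avoiding_connected V E col c u v)"

definition icva_bound :: "nat \<Rightarrow> nat \<Rightarrow> int" where
  "icva_bound n k = (if k = 1 then int (n choose 2)
     else \<lceil>(2 * real k - 1) / (2 * real k - 2) * real n - real k / (real k - 1)\<rceil>)"

end

theory Submission
  imports Defs "HOL-Library.Transitive_Closure_Table"
begin

(* For a colour c let W_c be the set of vertices not coloured c. Internal c-avoiding
  connectivity says precisely that the subgraph induced by W_c is connected, so it has at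
  least |W_c| - 1 edges. Summing over the k colours gives (k - 1) n on the left, while an edge
  is counted once for every colour missing at its ends: k - 1 times if it is monochromatic and
  k - 2 times if it is bichromatic. Every vertex has a neighbour of another colour (the first
  step of a path avoiding its own colour to a vertex of another colour), so at least n/2 edges
  are bichromatic, and (k - 1) n <= (k - 1) |E| - n/2 + k follows. For k = 1 a path avoiding
  the only colour has no internal vertex, so the graph is complete.

  The bound is attained for k >= 2 by two adjacent hubs 0 and 1 (coloured 0 and 1) together
  with paths from 0 to 1 through blocks of 2k - 2 consecutive vertices coloured
  0, 2, 2, 3, 3, ..., k-1, k-1, 1 (the last block possibly truncated, but still ending in
  colour 1). A colour other than 1 occupies at most two adjacent positions of a block, so from
  every vertex one of the two directions along its block reaches a hub avoiding it. *)

section \<open>Avoiding paths as walks in induced subgraphs\<close>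

definition adj_in :: "'a set set \<Rightarrow> 'a set \<Rightarrow> 'a \<Rightarrow> 'a \<Rightarrow> bool" where
  "adj_in E T a b \<longleftrightarrow> {a, b} \<in> E \<and> a \<in> T \<and> b \<in> T"

lemma symp_adj_in: "symp (adj_in E T)"
  by (auto intro: sympI simp: adj_in_def insert_commute)

lemma rtranclp_adj_in_sym: "(adj_in E T)\<^sup>*\<^sup>* a b \<Longrightarrow> (adj_in E T)\<^sup>*\<^sup>* b a"
  by (rule sympD[OF symp_rtranclp[OF symp_adj_in]])

lemma rtrancl_path_Cons_iff: "rtrancl_path r x (z # zs) y \<longleftrightarrow> r x z \<and> rtrancl_path r z zs y"
  by (auto elim: rtrancl_path.cases intro: rtrancl_path.step)

lemma rtrancl_path_Nil_iff: "rtrancl_path r x [] y \<longleftrightarrow> x = y"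
  by (auto elim: rtrancl_path.cases intro: rtrancl_path.base)

lemma rtrancl_path_iff_successively:
  "rtrancl_path r x xs y \<longleftrightarrow> successively r (x # xs) \<and> last (x # xs) = y"
  by (induction xs arbitrary: x) (simp_all add: rtrancl_path_Cons_iff rtrancl_path_Nil_iff)

lemma rtrancl_path_adj_in_subset: "rtrancl_path (adj_in E T) x xs y \<Longrightarrow> set xs \<subseteq> T"
  by (induction rule: rtrancl_path.induct) (auto simp: adj_in_def)

lemma internal_vertices_distinct:
  assumes "distinct p"
  shows "internal_vertices p = set p - {hd p, last p}"
proof (cases p)
  case (Cons a r)
  then show ?thesis
    using assms by (cases r rule: rev_cases) (auto simp: internal_vertices_def)
qed (simp add: internal_vertices_def)

lemma is_path_iff_successively:
  "is_path V E p u v \<longleftrightarrow> p \<noteq> [] \<and> hd p = u \<and> last p = v \<and> distinct p \<and> set p \<subseteq> V \<and>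
     successively (\<lambda>a b. {a, b} \<in> E) p"
  by (simp add: is_path_def successively_conv_nth)

lemma int_c_avoiding_connected_iff_rtranclp:
  assumes "u \<in> V" "v \<in> V"
  shows "int_c_avoiding_connected V E col c u v \<longleftrightarrow>
    (adj_in E ({w \<in> V. col w \<noteq> c} \<union> {u, v}))\<^sup>*\<^sup>* u v"
    (is "_ \<longleftrightarrow> (adj_in E ?T)\<^sup>*\<^sup>* u v")
proof
  assume "int_c_avoiding_connected V E col c u v"
  then obtain p where p: "is_path V E p u v" and avoid: "\<forall>w\<in>internal_vertices p. col w \<noteq> c"
    unfolding int_c_avoiding_connected_def by blast
  then have "p \<noteq> []" "hd p = u" and last: "last p = v" and dist: "distinct p"
    and sub: "set p \<subseteq> V" and edges: "successively (\<lambda>a b. {a, b} \<in> E) p"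
    unfolding is_path_iff_successively by simp_all
  then obtain xs where xs: "p = u # xs"
    by (metis list.collapse)
  have "set p \<subseteq> {u, v} \<union> internal_vertices p"
    using internal_vertices_distinct[OF dist] xs last by auto
  then have "set p \<subseteq> ?T"
    using sub avoid by blast
  with edges have "successively (adj_in E ?T) p"
    by (elim successively_mono) (auto simp: adj_in_def)
  then have "rtrancl_path (adj_in E ?T) u xs v"
    using xs last by (simp add: rtrancl_path_iff_successively)
  then show "(adj_in E ?T)\<^sup>*\<^sup>* u v"
    unfolding rtranclp_eq_rtrancl_path by blast
next
  assume "(adj_in E ?T)\<^sup>*\<^sup>* u v"
  then obtain ys where "rtrancl_path (adj_in E ?T) u ys v"
    unfolding rtranclp_eq_rtrancl_path by blast
  then obtain xs where path: "rtrancl_path (adj_in E ?T) u xs v" and dist: "distinct (u # xs)"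
    by (rule rtrancl_path_distinct) blast
  then have succ: "successively (adj_in E ?T) (u # xs)" and last: "last (u # xs) = v"
    by (simp_all add: rtrancl_path_iff_successively)
  have sub: "set xs \<subseteq> ?T"
    using path by (rule rtrancl_path_adj_in_subset)
  have "successively (\<lambda>a b. {a, b} \<in> E) (u # xs)"
    using succ by (rule successively_mono) (simp add: adj_in_def)
  then have "is_path V E (u # xs) u v"
    unfolding is_path_iff_successively using last sub dist assms by auto
  moreover have "\<forall>w\<in>internal_vertices (u # xs). col w \<noteq> c"
    using internal_vertices_distinct[OF dist] sub last by auto
  ultimately show "int_c_avoiding_connected V E col c u v"
    unfolding int_c_avoiding_connected_def by blast
qed

section \<open>The lower bound\<close>

lemma card_le_Suc_card_edges_if_connected:
  assumes "finite F"
    and conn: "\<And>w r. w \<in> W \<Longrightarrow> r \<in> W \<Longrightarrow> R\<^sup>*\<^sup>* w r"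
    and edge: "\<And>a b. R a b \<Longrightarrow> {a, b} \<in> F"
  shows "card W \<le> Suc (card F)"
proof (cases "W = {}")
  case False
  then obtain r where r: "r \<in> W" by blast
  define dist where "dist w = (LEAST m. (R ^^ m) w r)" for w
  have "\<exists>y. R w y \<and> dist y < dist w" if w: "w \<in> W - {r}" for w
  proof -
    have "\<exists>m. (R ^^ m) w r"
      using conn[of w r] r w by (simp add: rtranclp_power)
    then have wr: "(R ^^ dist w) w r"
      unfolding dist_def by (rule LeastI_ex)
    then obtain j where j: "dist w = Suc j"
      using w wr by (cases "dist w") auto
    then obtain y where "R w y" and yr: "(R ^^ j) y r"
      using wr relpowp_Suc_D2 by metis
    moreover have "dist y \<le> j"
      unfolding dist_def using yr by (rule Least_le)
    ultimately show ?thesis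
      using j by auto
  qed
  then obtain parent where parent: "\<And>w. w \<in> W - {r} \<Longrightarrow> R w (parent w) \<and> dist (parent w) < dist w"
    by metis
  have "inj_on (\<lambda>w. {w, parent w}) (W - {r})"
  proof (rule inj_onI)
    fix w w' assume "w \<in> W - {r}" "w' \<in> W - {r}" "{w, parent w} = {w', parent w'}"
    then show "w = w'"
      using parent by (metis doubleton_eq_iff less_asym)
  qed
  moreover have "(\<lambda>w. {w, parent w}) ` (W - {r}) \<subseteq> F"
    using parent edge by blast
  ultimately have "card (W - {r}) \<le> card F"
    using \<open>finite F\<close> by (rule card_inj_on_le)
  then show ?thesis
    using card_Suc_Diff1[OF _ r] by (cases "finite W") auto
qed simp

lemma sum_card_not_in_plus_sum_card:
  assumes "finite A" "finite C" "\<And>a. a \<in> A \<Longrightarrow> f a \<subseteq> C"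
  shows "(\<Sum>c\<in>C. card {a \<in> A. c \<notin> f a}) + (\<Sum>a\<in>A. card (f a)) = card C * card A"
proof -
  have "(\<Sum>a\<in>A. card (f a)) = (\<Sum>a\<in>A. card {c \<in> C. c \<in> f a})"
    using assms(3) by (intro sum.cong) (auto intro: arg_cong[where f = card])
  also have "\<dots> = (\<Sum>c\<in>C. card {a \<in> A. c \<in> f a})"
    using sum.swap_restrict[OF assms(1,2), of "\<lambda>_ _. 1::nat" "\<lambda>a c. c \<in> f a"] by simp
  finally have "(\<Sum>c\<in>C. card {a \<in> A. c \<notin> f a}) + (\<Sum>a\<in>A. card (f a))
      = (\<Sum>c\<in>C. card {a \<in> A. c \<notin> f a} + card {a \<in> A. c \<in> f a})"
    by (simp add: sum.distrib)
  also have "\<dots> = (\<Sum>c\<in>C. card A)"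
    using assms(1)
    by (intro sum.cong refl) (subst card_Un_disjoint[symmetric]; auto intro: arg_cong[where f = card])
  finally show ?thesis by simp
qed

lemma finite_edges: "simple_graph V E \<Longrightarrow> finite E"
  unfolding simple_graph_def by (meson Pow_iff finite_Pow_iff finite_subset subsetI)

lemma card_avoiding_colour_le:
  assumes "simple_graph V E" "int_vca_connected V E col"
  shows "card {v \<in> V. c \<noteq> col v} \<le> Suc (card {e \<in> E. c \<notin> col ` e})"
proof (rule card_le_Suc_card_edges_if_connected)
  show "finite {e \<in> E. c \<notin> col ` e}"
    using finite_edges[OF assms(1)] by simp
  show "(adj_in E {v \<in> V. col v \<noteq> c})\<^sup>*\<^sup>* w r"
    if "w \<in> {v \<in> V. c \<noteq> col v}" "r \<in> {v \<in> V. c \<noteq> col v}" for w r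
  proof -
    have "{x \<in> V. col x \<noteq> c} \<union> {w, r} = {v \<in> V. col v \<noteq> c}"
      using that by auto
    then show ?thesis
      using assms(2) that int_c_avoiding_connected_iff_rtranclp[of w V r E col c]
      unfolding int_vca_connected_def by auto
  qed
  show "{a, b} \<in> {e \<in> E. c \<notin> col ` e}" if "adj_in E {v \<in> V. col v \<noteq> c} a b" for a b
    using that by (auto simp: adj_in_def)
qed

lemma exists_neighbour_other_colour:
  assumes "int_vca_connected V E col" "v \<in> V" "w \<in> V" "col w \<noteq> col v"
  shows "\<exists>y. {v, y} \<in> E \<and> col y \<noteq> col v"
proof -
  let ?T = "{x \<in> V. col x \<noteq> col v} \<union> {v, w}"
  have "(adj_in E ?T)\<^sup>*\<^sup>* v w"
    using assms int_c_avoiding_connected_iff_rtranclp[of v V w E col "col v"]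
    unfolding int_vca_connected_def by blast
  then have "w = v \<or> (\<exists>y. {v, y} \<in> E \<and> col y \<noteq> col v)"
    by (induction rule: rtranclp_induct) (auto simp: adj_in_def assms(4))
  then show ?thesis
    using assms(4) by auto
qed

lemma sum_card_colours_edges:
  assumes "simple_graph V E"
  shows "(\<Sum>e\<in>E. card (col ` e)) = card E + card {e \<in> E. card (col ` e) = 2}"
proof -
  have "card (col ` e) = 1 + of_bool (card (col ` e) = 2)" if "e \<in> E" for e
  proof -
    have "card e = 2"
      using assms that unfolding simple_graph_def by blast
    then have "finite e" "e \<noteq> {}"
      by (auto intro: card_ge_0_finite)
    then have "card (col ` e) \<le> 2" "0 < card (col ` e)"
      using card_image_le[of e col] \<open>card e = 2\<close> by (auto simp: card_gt_0_iff)
    then show ?thesis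
      by (cases "card (col ` e) = 2") auto
  qed
  then have "(\<Sum>e\<in>E. card (col ` e)) = (\<Sum>e\<in>E. 1 + of_bool (card (col ` e) = 2))"
    by (rule sum.cong[OF refl])
  also have "\<dots> = card E + card {e \<in> E. card (col ` e) = 2}"
    using finite_edges[OF assms] by (simp add: sum_Suc Int_def)
  finally show ?thesis .
qed

lemma card_vertices_le_bichromatic:
  assumes "simple_graph V E" "int_vca_connected V E col"
    and other: "\<And>v. v \<in> V \<Longrightarrow> \<exists>w\<in>V. col w \<noteq> col v"
  shows "card V \<le> 2 * card {e \<in> E. card (col ` e) = 2}"
proof -
  let ?X = "{e \<in> E. card (col ` e) = 2}"
  have "V \<subseteq> \<Union>?X"
  proof
    fix v assume "v \<in> V"
    then obtain y where "{v, y} \<in> E" "col y \<noteq> col v"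
      using other exists_neighbour_other_colour[OF assms(2)] by metis
    then show "v \<in> \<Union>?X"
      by (intro UnionI[of "{v, y}"]) auto
  qed
  then have "card V \<le> card (\<Union>?X)"
    using assms(1) unfolding simple_graph_def
    by (intro card_mono) (auto intro: finite_subset[of _ V])
  also have "\<dots> \<le> (\<Sum>e\<in>?X. card e)"
    by (rule card_Union_le_sum_card)
  also have "\<dots> = 2 * card ?X"
    using assms(1) unfolding simple_graph_def by simp
  finally show ?thesis .
qed

lemma card_edges_lower_bound:
  assumes sg: "simple_graph V E" and conn: "int_vca_connected V E col"
    and k: "card (col ` V) = k" "2 \<le> k"
  shows "(2 * k - 1) * card V \<le> (2 * k - 2) * card E + 2 * k"
proof -
  let ?C = "col ` V" and ?X = "{e \<in> E. card (col ` e) = 2}"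
  have fin: "finite V" "finite E" "finite ?C"
    using sg finite_edges unfolding simple_graph_def by auto
  have vertices: "(\<Sum>c\<in>?C. card {v \<in> V. c \<noteq> col v}) + card V = k * card V"
    using sum_card_not_in_plus_sum_card[of V ?C "\<lambda>v. {col v}"] fin k by simp
  have edges: "(\<Sum>c\<in>?C. card {e \<in> E. c \<notin> col ` e}) + (\<Sum>e\<in>E. card (col ` e)) = k * card E"
    using sum_card_not_in_plus_sum_card[of E ?C "\<lambda>e. col ` e"] fin k sg
    unfolding simple_graph_def by auto
  have "(\<Sum>c\<in>?C. card {v \<in> V. c \<noteq> col v})
      \<le> (\<Sum>c\<in>?C. Suc (card {e \<in> E. c \<notin> col ` e}))"
    by (intro sum_mono card_avoiding_colour_le[OF sg conn])
  then have trees: "(\<Sum>c\<in>?C. card {v \<in> V. c \<noteq> col v})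
      \<le> (\<Sum>c\<in>?C. card {e \<in> E. c \<notin> col ` e}) + k"
    using k by (simp add: sum_Suc)
  have "\<exists>w\<in>V. col w \<noteq> col v" if "v \<in> V" for v
  proof -
    have "card (?C - {col v}) > 0"
      using that fin k by (simp add: card_Diff_singleton)
    then show ?thesis
      by (auto simp: card_gt_0_iff)
  qed
  then have "card V \<le> 2 * card ?X"
    by (rule card_vertices_le_bichromatic[OF sg conn])
  then show ?thesis
    using vertices edges trees sum_card_colours_edges[OF sg, of col] k
    by (simp add: diff_mult_distrib)
qed

lemma icva_bound_eq_ratio:
  assumes "2 \<le> k"
  shows "icva_bound n k = \<lceil>((2 * real k - 1) * real n - 2 * real k) / (2 * real k - 2)\<rceil>"
proof -
  have "real k / (real k - 1) = 2 * real k / (2 * real k - 2)"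
    using assms by (simp add: divide_simps)
  then have "(2 * real k - 1) / (2 * real k - 2) * real n - real k / (real k - 1)
      = ((2 * real k - 1) * real n - 2 * real k) / (2 * real k - 2)"
    by (simp only: times_divide_eq_left diff_divide_distrib[symmetric])
  then show ?thesis
    using assms by (simp add: icva_bound_def)
qed

lemma icva_bound_le:
  assumes "2 \<le> k" "(2 * k - 1) * n \<le> (2 * k - 2) * m + 2 * k"
  shows "icva_bound n k \<le> int m"
proof -
  have "real ((2 * k - 1) * n) \<le> real ((2 * k - 2) * m + 2 * k)"
    using assms(2) by (simp only: of_nat_le_iff)
  moreover have "real ((2 * k - 2) * m + 2 * k) = real m * (2 * real k - 2) + 2 * real k"
    "real ((2 * k - 1) * n) = (2 * real k - 1) * real n"
    using assms(1) by (simp_all add: of_nat_diff)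
  ultimately have "(2 * real k - 1) * real n - 2 * real k \<le> real m * (2 * real k - 2)"
    by linarith
  then show ?thesis
    using assms(1) by (simp add: icva_bound_eq_ratio ceiling_le_iff pos_divide_le_eq)
qed

lemma monochromatic_vca_connected_adjacent:
  assumes "int_vca_connected V E col" "u \<in> V" "v \<in> V" "u \<noteq> v"
    and "\<And>x. x \<in> V \<Longrightarrow> col x = col u"
  shows "{u, v} \<in> E"
proof -
  have "{x \<in> V. col x \<noteq> col u} \<union> {u, v} = {u, v}"
    using assms(5) by auto
  then have "(adj_in E {u, v})\<^sup>*\<^sup>* u v"
    using assms(1-3) int_c_avoiding_connected_iff_rtranclp[of u V v E col "col u"]
    unfolding int_vca_connected_def by auto
  then have "v = u \<or> {u, v} \<in> E"
    by (induction rule: rtranclp_induct) (auto simp: adj_in_def insert_commute)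
  then show ?thesis
    using assms(4) by blast
qed

lemma card_edges_lower_bound_one_colour:
  assumes "simple_graph V E" "int_vca_connected V E col" "card (col ` V) = 1"
  shows "card V choose 2 \<le> card E"
proof -
  obtain c where "col ` V = {c}"
    using assms(3) card_1_singletonE by blast
  have "{e. e \<subseteq> V \<and> card e = 2} \<subseteq> E"
  proof
    fix e assume "e \<in> {e. e \<subseteq> V \<and> card e = 2}"
    then obtain a b where "e = {a, b}" "a \<noteq> b" "a \<in> V" "b \<in> V"
      by (auto simp: card_2_iff)
    moreover have "col x = col a" if "x \<in> V" for x
      using \<open>col ` V = {c}\<close> \<open>a \<in> V\<close> that by (metis imageI singletonD)
    ultimately show "e \<in> E"
      using monochromatic_vca_connected_adjacent[OF assms(2)] by blast
  qed
  then show ?thesis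
    using assms(1) n_subsets[of V 2] card_mono[OF finite_edges[OF assms(1)]]
    unfolding simple_graph_def by metis
qed

lemma icva_bound_le_card_edges:
  assumes "simple_graph V E" "card (col ` V) = k" "1 \<le> k" "int_vca_connected V E col"
  shows "icva_bound (card V) k \<le> int (card E)"
proof (cases "k = 1")
  case True
  then show ?thesis
    using card_edges_lower_bound_one_colour[OF assms(1,4)] assms(2) by (simp add: icva_bound_def)
next
  case False
  then show ?thesis
    using icva_bound_le card_edges_lower_bound[OF assms(1,4,2)] assms(3) by simp
qed

section \<open>Extremal graphs\<close>

lemma complete_graph_vca_connected: "int_vca_connected V {e. e \<subseteq> V \<and> card e = 2} col"
  unfolding int_vca_connected_def
proof (intro allI ballI)
  fix c u v assume "u \<in> V" "v \<in> V"
  moreover have "(adj_in {e. e \<subseteq> V \<and> card e = 2} ({w \<in> V. col w \<noteq> c} \<union> {u, v}))\<^sup>*\<^sup>* u v"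
    using calculation by (cases "u = v") (auto simp: adj_in_def intro: r_into_rtranclp)
  ultimately show "int_c_avoiding_connected V {e. e \<subseteq> V \<and> card e = 2} col c u v"
    by (simp add: int_c_avoiding_connected_iff_rtranclp)
qed

definition block_pos :: "nat \<Rightarrow> nat \<Rightarrow> nat" where
  "block_pos L v = (v - 2) mod L"

definition block_end :: "nat \<Rightarrow> nat \<Rightarrow> nat \<Rightarrow> bool" where
  "block_end L n v \<longleftrightarrow> block_pos L v = L - 1 \<or> Suc v = n"

definition block_next :: "nat \<Rightarrow> nat \<Rightarrow> nat \<Rightarrow> nat" where
  "block_next L n v = (if block_end L n v then 1 else Suc v)"

definition block_edges :: "nat \<Rightarrow> nat \<Rightarrow> nat set set" where
  "block_edges L n = insert {0, 1}
     ((\<lambda>v. {v, block_next L n v}) ` {2..<n} \<union> (\<lambda>v. {0, v}) ` {v \<in> {2..<n}. block_pos L v = 0})"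

definition position_colour :: "nat \<Rightarrow> nat" where
  "position_colour p = (if p = 0 then 0 else 2 + (p - 1) div 2)"

definition block_colour :: "nat \<Rightarrow> nat \<Rightarrow> nat \<Rightarrow> nat" where
  "block_colour L n v = (if v = 0 then 0 else if v = 1 \<or> block_end L n v then 1
     else position_colour (block_pos L v))"

lemma position_colour_neq_1: "position_colour p \<noteq> 1"
  by (simp add: position_colour_def)

lemma position_colour_eq_0_iff: "position_colour p = 0 \<longleftrightarrow> p = 0"
  by (simp add: position_colour_def)

lemma position_colour_eq_imp_le_Suc: "position_colour p = position_colour q \<Longrightarrow> p \<le> Suc q"
  by (auto simp: position_colour_def split: if_splits)

lemma position_colour_one_side:
  "c \<noteq> 1 \<and> (\<forall>q>p. position_colour q \<noteq> c) \<or> c \<noteq> 0 \<and> (\<forall>q<p. position_colour q \<noteq> c)"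
proof (cases "c = 1")
  case True
  then show ?thesis
    using position_colour_neq_1 by simp
next
  case False
  show ?thesis
  proof (cases "\<exists>q>p. position_colour q = c")
    case True
    then obtain q where q: "p < q" "position_colour q = c"
      by blast
    have "position_colour q' \<noteq> c" if "q' < p" for q'
      using q that position_colour_eq_imp_le_Suc[of q q'] by linarith
    moreover have "c \<noteq> 0"
      using q position_colour_eq_0_iff[of q] by linarith
    ultimately show ?thesis
      by blast
  qed (use False in blast)
qed

lemma block_interval:
  assumes "0 < L" "2 \<le> w" "w < n"
  obtains s e where "2 \<le> s" "s \<le> w" "w \<le> e" "e < n"
    and "\<And>x. s \<le> x \<Longrightarrow> x \<le> e \<Longrightarrow> block_pos L x = x - s"
    and "\<And>x. s \<le> x \<Longrightarrow> x \<le> e \<Longrightarrow> block_end L n x \<longleftrightarrow> x = e"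
proof -
  define q where "q = (w - 2) div L"
  define s where "s = 2 + q * L"
  define e where "e = min (s + L - 1) (n - 1)"
  have w: "w - 2 = q * L + block_pos L w" "block_pos L w < L"
    using assms(1) by (simp_all add: q_def block_pos_def)
  have pos: "block_pos L x = x - s" if "s \<le> x" "x \<le> e" for x
  proof -
    have "x - 2 = (x - s) + q * L" "x - s < L"
      using that assms(1) by (auto simp: s_def e_def)
    then show ?thesis
      by (simp add: block_pos_def)
  qed
  have "block_end L n x \<longleftrightarrow> x = e" if "s \<le> x" "x \<le> e" for x
    using that pos[OF that] assms by (auto simp: block_end_def e_def min_def)
  moreover have "2 \<le> s" "s \<le> w" "w \<le> e" "e < n"
    using w assms by (auto simp: s_def e_def)
  ultimately show thesis
    using that pos by blast
qed

lemma block_edges_step: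
  "2 \<le> x \<Longrightarrow> x < n \<Longrightarrow> \<not> block_end L n x \<Longrightarrow> {x, Suc x} \<in> block_edges L n"
  by (force simp: block_edges_def block_next_def)

lemma block_edges_end:
  "2 \<le> x \<Longrightarrow> x < n \<Longrightarrow> block_end L n x \<Longrightarrow> {x, 1} \<in> block_edges L n"
  by (force simp: block_edges_def block_next_def)

lemma block_edges_start:
  "2 \<le> x \<Longrightarrow> x < n \<Longrightarrow> block_pos L x = 0 \<Longrightarrow> {0, x} \<in> block_edges L n"
  by (auto simp: block_edges_def)

lemma block_edges_hubs: "{0, 1} \<in> block_edges L n"
  by (simp add: block_edges_def)

lemma rtranclp_adj_in_interval:
  assumes "a \<le> b" "\<And>x. a \<le> x \<Longrightarrow> x < b \<Longrightarrow> {x, Suc x} \<in> E" "{a..b} \<subseteq> T"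
  shows "(adj_in E T)\<^sup>*\<^sup>* a b"
  using assms
proof (induction b)
  case (Suc b)
  show ?case
  proof (cases "a = Suc b")
    case False
    then have "(adj_in E T)\<^sup>*\<^sup>* a b"
      using Suc by (intro Suc.IH) auto
    moreover have "adj_in E T b (Suc b)"
      using Suc False by (auto simp: adj_in_def)
    ultimately show ?thesis
      by (rule rtranclp.rtrancl_into_rtrancl)
  qed simp
qed simp

lemma block_walks_to_hubs:
  assumes "2 \<le> s" "s \<le> w" "w \<le> e" "e < n" "block_pos L s = 0"
    and is_end: "\<And>x. s \<le> x \<Longrightarrow> x \<le> e \<Longrightarrow> block_end L n x \<longleftrightarrow> x = e"
  shows "{w..e} \<subseteq> T \<Longrightarrow> 1 \<in> T \<Longrightarrow> (adj_in (block_edges L n) T)\<^sup>*\<^sup>* w 1"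
    and "{s..w} \<subseteq> T \<Longrightarrow> 0 \<in> T \<Longrightarrow> (adj_in (block_edges L n) T)\<^sup>*\<^sup>* w 0"
proof -
  let ?R = "adj_in (block_edges L n) T"
  have step: "{x, Suc x} \<in> block_edges L n" if "s \<le> x" "x < e" for x
    using that assms by (intro block_edges_step) auto
  show "?R\<^sup>*\<^sup>* w 1" if "{w..e} \<subseteq> T" "1 \<in> T"
  proof -
    have "?R\<^sup>*\<^sup>* w e"
      using that assms step by (intro rtranclp_adj_in_interval) auto
    moreover have "?R e 1"
      using that assms block_edges_end[of e n L] by (auto simp: adj_in_def)
    ultimately show ?thesis
      by (rule rtranclp.rtrancl_into_rtrancl)
  qed
  show "?R\<^sup>*\<^sup>* w 0" if "{s..w} \<subseteq> T" "0 \<in> T"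
  proof -
    have "?R\<^sup>*\<^sup>* s w"
      using that assms step by (intro rtranclp_adj_in_interval) auto
    moreover have "?R s 0"
      using that assms block_edges_start[of s n L] by (auto simp: adj_in_def insert_commute)
    ultimately show ?thesis
      by (meson rtranclp_adj_in_sym rtranclp.rtrancl_into_rtrancl)
  qed
qed

lemma block_vertex_reaches_hub:
  assumes "0 < L" "2 \<le> w" "w < n" "w \<in> T"
    and T: "{x \<in> {0..<n}. block_colour L n x \<noteq> c} \<subseteq> T"
  shows "c \<noteq> 1 \<and> (adj_in (block_edges L n) T)\<^sup>*\<^sup>* w 1
    \<or> c \<noteq> 0 \<and> (adj_in (block_edges L n) T)\<^sup>*\<^sup>* w 0"
proof -
  obtain s e where se: "2 \<le> s" "s \<le> w" "w \<le> e" "e < n"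
    and pos: "\<And>x. s \<le> x \<Longrightarrow> x \<le> e \<Longrightarrow> block_pos L x = x - s"
    and is_end: "\<And>x. s \<le> x \<Longrightarrow> x \<le> e \<Longrightarrow> block_end L n x \<longleftrightarrow> x = e"
    using block_interval[OF assms(1-3)] by blast
  have "block_pos L s = 0"
    using pos[of s] se by simp
  note walks = block_walks_to_hubs[OF se this is_end]
  have colour: "block_colour L n x = (if x = e then 1 else position_colour (x - s))"
    if "s \<le> x" "x \<le> e" for x
    using that se pos is_end by (simp add: block_colour_def)
  have in_T: "x \<in> T" if "s \<le> x" "x \<le> e" "x \<noteq> w \<Longrightarrow> block_colour L n x \<noteq> c" for x
    using that se assms(4) T by (cases "x = w") auto
  from position_colour_one_side[of c "w - s"] show ?thesis
  proof
    assume forward: "c \<noteq> 1 \<and> (\<forall>q>w - s. position_colour q \<noteq> c)"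
    have "x \<in> T" if "w \<le> x" "x \<le> e" for x
    proof (rule in_T)
      assume "x \<noteq> w"
      then have "w - s < x - s"
        using that se by auto
      then show "block_colour L n x \<noteq> c"
        using that forward se colour[of x] by auto
    qed (use that se in auto)
    then have "{w..e} \<subseteq> T"
      by auto
    moreover have "1 \<in> T"
      using T se forward by (auto simp: block_colour_def)
    ultimately show ?thesis
      using forward walks(1) by blast
  next
    assume backward: "c \<noteq> 0 \<and> (\<forall>q<w - s. position_colour q \<noteq> c)"
    have "x \<in> T" if "s \<le> x" "x \<le> w" for x
    proof (rule in_T)
      assume "x \<noteq> w"
      then have "x - s < w - s"
        using that se by auto
      then show "block_colour L n x \<noteq> c"
        using that backward se colour[of x] by auto
    qed (use that se in auto)
    then have "{s..w} \<subseteq> T"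
      by auto
    moreover have "0 \<in> T"
      using T se backward by (auto simp: block_colour_def)
    ultimately show ?thesis
      using backward walks(2) by blast
  qed
qed

lemma block_graph_vca_connected:
  assumes "0 < L"
  shows "int_vca_connected {0..<n} (block_edges L n) (block_colour L n)"
  unfolding int_vca_connected_def
proof (intro allI ballI)
  fix c u v assume u: "u \<in> {0..<n}" and v: "v \<in> {0..<n}"
  define T where "T = {x \<in> {0..<n}. block_colour L n x \<noteq> c} \<union> {u, v}"
  let ?R = "adj_in (block_edges L n) T"
  have hub: "\<exists>h \<in> {0, 1} \<inter> T. ?R\<^sup>*\<^sup>* x h" if "x \<in> {u, v}" for x
  proof (cases "x \<le> 1")
    case True
    then have "x \<in> {0, 1} \<inter> T"
      using that T_def by auto
    then show ?thesis
      by blast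
  next
    case False
    then have "c \<noteq> 1 \<and> ?R\<^sup>*\<^sup>* x 1 \<or> c \<noteq> 0 \<and> ?R\<^sup>*\<^sup>* x 0"
      using that u v T_def by (intro block_vertex_reaches_hub[OF assms]) auto
    moreover have "c \<noteq> 0 \<Longrightarrow> 0 \<in> T" "c \<noteq> 1 \<Longrightarrow> 1 \<in> T"
      using False that u v by (auto simp: T_def block_colour_def)
    ultimately show ?thesis
      by blast
  qed
  obtain hu hv where "hu \<in> {0, 1} \<inter> T" "hv \<in> {0, 1} \<inter> T" "?R\<^sup>*\<^sup>* u hu" "?R\<^sup>*\<^sup>* v hv"
    using hub by blast
  moreover have "?R\<^sup>*\<^sup>* hu hv" if "hu \<in> {0, 1} \<inter> T" "hv \<in> {0, 1} \<inter> T"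
    using that block_edges_hubs[of L n]
    by (cases "hu = hv") (auto simp: adj_in_def insert_commute intro: r_into_rtranclp)
  ultimately have "?R\<^sup>*\<^sup>* u v"
    by (meson rtranclp_adj_in_sym rtranclp_trans)
  then show "int_c_avoiding_connected {0..<n} (block_edges L n) (block_colour L n) c u v"
    using u v by (simp add: int_c_avoiding_connected_iff_rtranclp T_def)
qed

lemma block_graph_simple:
  assumes "2 \<le> n"
  shows "simple_graph {0..<n} (block_edges L n)"
proof -
  have "e \<subseteq> {0..<n} \<and> card e = 2" if "e \<in> block_edges L n" for e
    using that assms unfolding block_edges_def block_next_def block_end_def by auto
  then show ?thesis
    unfolding simple_graph_def by auto
qed

lemma block_graph_colours:
  assumes "2 \<le> k" "2 * k \<le> n"
  shows "block_colour (2 * k - 2) n ` {0..<n} = {0..<k}"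
proof
  show "block_colour (2 * k - 2) n ` {0..<n} \<subseteq> {0..<k}"
  proof (rule image_subsetI)
    fix x assume "x \<in> {0..<n}"
    have "block_pos (2 * k - 2) x < 2 * k - 2"
      using assms(1) by (simp add: block_pos_def)
    then show "block_colour (2 * k - 2) n x \<in> {0..<k}"
      using assms(1) by (auto simp: block_colour_def block_end_def position_colour_def)
  qed
  show "{0..<k} \<subseteq> block_colour (2 * k - 2) n ` {0..<n}"
  proof
    fix c assume c: "c \<in> {0..<k}"
    consider "c = 0" | "c = 1" | "2 \<le> c"
      by linarith
    then show "c \<in> block_colour (2 * k - 2) n ` {0..<n}"
    proof cases
      case 3
      have "block_pos (2 * k - 2) (2 * c - 1) = 2 * c - 3"
        using 3 c by (simp add: block_pos_def)
      moreover have "position_colour (2 * c - 3) = c"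
        using 3 unfolding position_colour_def by presburger
      moreover have "\<not> block_end (2 * k - 2) n (2 * c - 1)"
        using calculation(1) 3 c assms by (simp add: block_end_def)
      ultimately have "block_colour (2 * k - 2) n (2 * c - 1) = c"
        using 3 by (simp add: block_colour_def)
      moreover have "2 * c - 1 < n"
        using c assms by simp
      ultimately show ?thesis
        by (metis atLeastLessThan_iff image_eqI zero_le)
    next
      case 1
      have "block_colour (2 * k - 2) n 0 = c"
        using 1 by (simp add: block_colour_def)
      then show ?thesis
        using assms by (intro image_eqI[of _ _ 0]) auto
    next
      case 2
      have "block_colour (2 * k - 2) n 1 = c"
        using 2 by (simp add: block_colour_def)
      then show ?thesis
        using assms by (intro image_eqI[of _ _ 1]) auto
    qed
  qed
qed

lemma card_block_starts:
  assumes "0 < L"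
  shows "card {v \<in> {2..<n}. block_pos L v = 0} = nat \<lceil>real (n - 2) / real L\<rceil>"
proof -
  have below_iff: "j * L < n - 2 \<longleftrightarrow> j < nat \<lceil>real (n - 2) / real L\<rceil>" for j
  proof -
    have "j * L < n - 2 \<longleftrightarrow> real j < real (n - 2) / real L"
      using assms by (simp add: pos_less_divide_eq flip: of_nat_mult)
    also have "\<dots> \<longleftrightarrow> int j < \<lceil>real (n - 2) / real L\<rceil>"
      by (simp add: less_ceiling_iff)
    finally show ?thesis
      by linarith
  qed
  have "{v \<in> {2..<n}. block_pos L v = 0} = (\<lambda>j. 2 + j * L) ` {..<nat \<lceil>real (n - 2) / real L\<rceil>}"
    (is "?S = _ ` {..<?m}")
  proof (intro equalityI subsetI)
    fix v assume "v \<in> ?S"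
    then have "v = 2 + (v - 2) div L * L" "(v - 2) div L * L < n - 2"
      using div_mult_mod_eq[of "v - 2" L] by (auto simp: block_pos_def)
    then show "v \<in> (\<lambda>j. 2 + j * L) ` {..<?m}"
      using below_iff by blast
  next
    fix v assume "v \<in> (\<lambda>j. 2 + j * L) ` {..<?m}"
    then obtain j where "j * L < n - 2" "v = 2 + j * L"
      using below_iff by auto
    then show "v \<in> ?S"
      by (simp add: block_pos_def)
  qed
  moreover have "inj (\<lambda>j. 2 + j * L)"
    using assms by (auto intro: injI)
  ultimately show ?thesis
    by (simp add: card_image inj_on_subset)
qed

lemma card_block_edges:
  assumes "2 \<le> n"
  shows "card (block_edges L n) = n - 1 + card {v \<in> {2..<n}. block_pos L v = 0}"
proof -
  let ?S = "{v \<in> {2..<n}. block_pos L v = 0}"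
  let ?A = "(\<lambda>v. {v, block_next L n v}) ` {2..<n}" and ?B = "(\<lambda>v. {0, v}) ` ?S"
  have next_cases: "block_next L n v = 1 \<or> block_next L n v = Suc v" for v
    by (simp add: block_next_def)
  have "inj_on (\<lambda>v. {v, block_next L n v}) {2..<n}"
  proof (rule inj_onI)
    fix v w assume "v \<in> {2..<n}" "w \<in> {2..<n}" "{v, block_next L n v} = {w, block_next L n w}"
    then show "v = w"
      using next_cases[of v] next_cases[of w] by (auto simp: doubleton_eq_iff)
  qed
  then have "card ?A = n - 2"
    by (simp add: card_image)
  moreover have "card ?B = card ?S"
    by (rule card_image) (auto simp: inj_on_def doubleton_eq_iff)
  moreover have "?A \<inter> ?B = {}" "{0, 1} \<notin> ?A \<union> ?B"
  proof -
    have "\<forall>e\<in>?A. 0 \<notin> e" "\<forall>e\<in>?B. 0 \<in> e \<and> 1 \<notin> e"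
      by (auto simp: block_next_def)
    then show "?A \<inter> ?B = {}" "{0, 1} \<notin> ?A \<union> ?B"
      by blast+
  qed
  ultimately have "card (insert {0, 1} (?A \<union> ?B)) = Suc (n - 2 + card ?S)"
    by (simp add: card_Un_disjoint)
  then show ?thesis
    using assms by (simp add: block_edges_def)
qed

lemma icva_bound_eq_blocks:
  assumes "2 \<le> k" "2 \<le> n"
  shows "icva_bound n k = int (n - 1) + \<lceil>real (n - 2) / real (2 * k - 2)\<rceil>"
proof -
  have "((2 * real k - 1) * real n - 2 * real k) / (2 * real k - 2)
      = real (n - 2) / real (2 * k - 2) + of_int (int (n - 1))"
    using assms by (simp add: of_nat_diff field_simps)
  then have "icva_bound n k = \<lceil>real (n - 2) / real (2 * k - 2) + of_int (int (n - 1))\<rceil>"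
    using assms(1) by (simp only: icva_bound_eq_ratio)
  then show ?thesis
    by (metis ceiling_add_of_int add.commute)
qed

definition icva_bound_attained :: "nat \<Rightarrow> nat \<Rightarrow> bool" where
  "icva_bound_attained n k \<longleftrightarrow> (\<exists>(V::nat set) (E::nat set set) (col::nat \<Rightarrow> nat).
     simple_graph V E \<and> card V = n \<and> card (col ` V) = k \<and> int_vca_connected V E col
     \<and> int (card E) = icva_bound n k)"

lemma icva_bound_attained_one_colour:
  assumes "1 \<le> n"
  shows "icva_bound_attained n 1"
  unfolding icva_bound_attained_def
proof (intro exI conjI)
  show "simple_graph {0..<n} {e. e \<subseteq> {0..<n} \<and> card e = 2}"
    by (simp add: simple_graph_def)
  show "card ((\<lambda>_. 0::nat) ` {0..<n}) = 1"
    using assms by (simp add: image_constant_conv)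
  show "int (card {e. e \<subseteq> {0..<n} \<and> card e = 2}) = icva_bound n 1"
    by (simp add: icva_bound_def n_subsets)
qed (simp_all add: complete_graph_vca_connected)

lemma icva_bound_attained_blocks:
  assumes "2 \<le> k" "2 * k \<le> n"
  shows "icva_bound_attained n k"
  unfolding icva_bound_attained_def
proof (intro exI conjI)
  let ?L = "2 * k - 2"
  have "0 < ?L" "2 \<le> n"
    using assms by simp_all
  show "simple_graph {0..<n} (block_edges ?L n)"
    using \<open>2 \<le> n\<close> by (rule block_graph_simple)
  show "card (block_colour ?L n ` {0..<n}) = k"
    using block_graph_colours[OF assms] by simp
  show "int_vca_connected {0..<n} (block_edges ?L n) (block_colour ?L n)"
    using \<open>0 < ?L\<close> by (rule block_graph_vca_connected)
  have "0 \<le> \<lceil>real (n - 2) / real ?L\<rceil>"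
    by (simp add: less_le_trans[of "-1" 0])
  then show "int (card (block_edges ?L n)) = icva_bound n k"
    using card_block_edges[OF \<open>2 \<le> n\<close>] card_block_starts[OF \<open>0 < ?L\<close>]
      icva_bound_eq_blocks[OF assms(1) \<open>2 \<le> n\<close>] by simp
qed simp

lemma icva_bound_eventually_attained:
  assumes "1 \<le> k"
  shows "\<exists>N. \<forall>n\<ge>N. icva_bound_attained n k"
proof (cases "k = 1")
  case True
  then show ?thesis
    using icva_bound_attained_one_colour by blast
next
  case False
  then show ?thesis
    using assms icva_bound_attained_blocks[of k] by (intro exI[of _ "2 * k"]) simp
qed

theorem theorem3p16:
  fixes V :: "'a set" and E :: "'a set set" and col :: "'a \<Rightarrow> 'c" and n k :: nat
  assumes "simple_graph V E" and "card V = n" and "card (col ` V) = k" and "k \<ge> 1"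
    and "int_vca_connected V E col"
  shows "int (card E) \<ge> icva_bound n k
    \<and> (\<forall>k'::nat. k' \<ge> 1 \<longrightarrow> (\<exists>N. \<forall>n'\<ge>N. \<exists>(V'::nat set) (E'::nat set set) (col'::nat \<Rightarrow> nat).
          simple_graph V' E' \<and> card V' = n' \<and> card (col' ` V') = k'
          \<and> int_vca_connected V' E' col' \<and> int (card E') = icva_bound n' k'))"
  using icva_bound_le_card_edges[OF assms(1,3,4,5)] icva_bound_eventually_attained assms(2)
  unfolding icva_bound_attained_def by blast

end
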